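(* Let $\epsilon$ be a sequence to which Algorithm A (described below) is applied. Suppose that at some step of the algorithm the current sequence has an occurrence of $p$ or of $q$ at position $i$. Then among the entries of the current sequence in positions $i,i+1,i+2,i+3$, only those in positions $i$ and $i+2$ can have been changed from the original sequence $\epsilon$.
   Context: The reduction of an integer word replaces each occurrence of its $k$-th smallest distinct value by $k-1$; a consecutive pattern $\underline{p_1p_2p_3p_4}$ occurs in a sequence at position $i$ if the reduction of its entries in positions $i,\dots,i+3$ equals $p_1p_2p_3p_4$. Let $p=\underline{0102}$ and $q=\underline{0112}$. Algorithm A, on input an integer sequence $\mathrm{seq}=\epsilon_1\cdots\epsilon_n$: let $E_p$, $E_q$ be the sets of positions of occurrences of $p$, resp. $q$, in the input sequence; set $\mathrm{last}:=$ null. For $i=1,2,\dots,n$ in order: let $N_p,N_q$ be the sets of positions of occurrences of $p$, resp. $q$, in the current sequence. If $i-2\in E_p$: set $\mathrm{last}:=\mathrm{seq}[i]$ and $\mathrm{seq}[i]:=\mathrm{seq}[i-1]$. Else if $i-2\in E_q$: set $\mathrm{last}:=\mathrm{seq}[i]$ and $\mathrm{seq}[i]:=\mathrm{seq}[i-2]$. Else if $i-2\in N_p$ or $i-2\in N_q$: swap the values of $\mathrm{seq}[i]$ and $\mathrm{last}$. Output $\mathrm{seq}$. *)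

theory Defs
  imports Main
begin

definition red :: "int list \<Rightarrow> nat list" where
  "red xs = map (\<lambda>x. card {y \<in> set xs. y < x}) xs"

text \<open>Consecutive pattern occurrence; positions are 0-based list indices
(paper position i corresponds to index i-1).\<close>
definition occurs :: "nat list \<Rightarrow> int list \<Rightarrow> nat \<Rightarrow> bool" where
  "occurs pat s i \<longleftrightarrow> i + length pat \<le> length s \<and> red (take (length pat) (drop i s)) = pat"

definition pat_p :: "nat list" where "pat_p = [0,1,0,2]"
definition pat_q :: "nat list" where "pat_q = [0,1,1,2]"

text \<open>The state is (current sequence, last), last = None meaning null.
E_p, E_q are the occurrences in the original input eps; N_p, N_q those in the
current sequence. Swapping with a null last is never reached; it is modelled
as doing nothing.\<close>
definition algA_step :: "int list \<Rightarrow> int list \<times> int option \<Rightarrow> nat \<Rightarrow> int list \<times> int option" where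
  "algA_step eps st i = (let s = fst st; last = snd st in
     if 2 \<le> i \<and> occurs pat_p eps (i - 2) then (s[i := s ! (i - 1)], Some (s ! i))
     else if 2 \<le> i \<and> occurs pat_q eps (i - 2) then (s[i := s ! (i - 2)], Some (s ! i))
     else if 2 \<le> i \<and> (occurs pat_p s (i - 2) \<or> occurs pat_q s (i - 2)) then
       (case last of Some v \<Rightarrow> (s[i := v], Some (s ! i)) | None \<Rightarrow> (s, last))
     else (s, last))"

definition algA_state :: "int list \<Rightarrow> nat \<Rightarrow> int list \<times> int option" where
  "algA_state eps k = foldl (algA_step eps) (eps, None) [0..<k]"

definition algA :: "int list \<Rightarrow> int list" where
  "algA eps = fst (algA_state eps (length eps))"

end

theory Submission
  imports Defs
begin

(* Entry i of the sequence is written only at step i, so after k steps the entries from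
   position k on are still the original ones. Induction over the steps shows that every
   changed entry m is isolated (entry m-1 is original), sits at a weak descent
   eps(m) <= eps(m-1) < eps(m+1) of the input, has new value below eps(m+1), and does not
   complete an occurrence of p or q ending at m; moreover last holds the original value of a
   changed entry among the two most recent positions, which is what a swap writes back.
   Now let the current sequence have an occurrence at j. A change at j+1 would make the
   (original) entry j+2 exceed entry j+1, impossible in the shapes 0102 and 0112; a change
   at j+3 is excluded by the invariant. *)

lemma card_below_less_iff:
  fixes a b :: "'a::linorder"
  assumes "finite S" "a \<in> S"
  shows "card {y \<in> S. y < a} < card {y \<in> S. y < b} \<longleftrightarrow> a < b"
proof
  assume "a < b"
  then have "{y \<in> S. y < a} \<subset> {y \<in> S. y < b}"
    using assms(2) by auto
  then show "card {y \<in> S. y < a} < card {y \<in> S. y < b}"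
    using assms(1) by (simp add: psubset_card_mono)
next
  assume "card {y \<in> S. y < a} < card {y \<in> S. y < b}"
  moreover have "card {y \<in> S. y < b} \<le> card {y \<in> S. y < a}" if "b \<le> a"
    using that assms(1) by (intro card_mono) auto
  ultimately show "a < b"
    by (meson not_le)
qed

lemma nth_red_less_iff:
  assumes "i < length xs" "j < length xs"
  shows "red xs ! i < red xs ! j \<longleftrightarrow> xs ! i < xs ! j"
  using assms by (simp add: red_def card_below_less_iff)

lemma red_eq_pat_p_iff: "red [a, b, c, d] = pat_p \<longleftrightarrow> a < b \<and> c = a \<and> b < d"
proof
  assume red: "red [a, b, c, d] = pat_p"
  have "a < b" "b < d" "\<not> a < c" "\<not> c < a"
    using nth_red_less_iff[of 0 "[a, b, c, d]" 1] nth_red_less_iff[of 1 "[a, b, c, d]" 3]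
      nth_red_less_iff[of 0 "[a, b, c, d]" 2] nth_red_less_iff[of 2 "[a, b, c, d]" 0]
    by (simp_all add: red pat_p_def)
  then show "a < b \<and> c = a \<and> b < d"
    by simp
next
  assume "a < b \<and> c = a \<and> b < d"
  then have "{y \<in> {a, b, c, d}. y < a} = {}" "{y \<in> {a, b, c, d}. y < b} = {a}"
    "{y \<in> {a, b, c, d}. y < d} = {a, b}"
    by auto
  with \<open>a < b \<and> c = a \<and> b < d\<close> show "red [a, b, c, d] = pat_p"
    by (simp add: red_def pat_p_def)
qed

lemma red_eq_pat_q_iff: "red [a, b, c, d] = pat_q \<longleftrightarrow> a < b \<and> c = b \<and> b < d"
proof
  assume red: "red [a, b, c, d] = pat_q"
  have "a < b" "b < d" "\<not> b < c" "\<not> c < b"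
    using nth_red_less_iff[of 0 "[a, b, c, d]" 1] nth_red_less_iff[of 1 "[a, b, c, d]" 3]
      nth_red_less_iff[of 1 "[a, b, c, d]" 2] nth_red_less_iff[of 2 "[a, b, c, d]" 1]
    by (simp_all add: red pat_q_def)
  then show "a < b \<and> c = b \<and> b < d"
    by simp
next
  assume "a < b \<and> c = b \<and> b < d"
  then have "{y \<in> {a, b, c, d}. y < a} = {}" "{y \<in> {a, b, c, d}. y < b} = {a}"
    "{y \<in> {a, b, c, d}. y < d} = {a, b}"
    by auto
  with \<open>a < b \<and> c = b \<and> b < d\<close> show "red [a, b, c, d] = pat_q"
    by (simp add: red_def pat_q_def)
qed

lemma occurs_length_4:
  assumes "length pat = 4"
  shows "occurs pat s j \<longleftrightarrow> j + 4 \<le> length s \<and> red [s ! j, s ! (j + 1), s ! (j + 2), s ! (j + 3)] = pat"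
  using assms by (auto simp: occurs_def take_Suc_conv_app_nth numeral_eq_Suc)

lemma occurs_pat_p_iff:
  "occurs pat_p s j \<longleftrightarrow> j + 4 \<le> length s \<and> s ! j < s ! (j + 1) \<and> s ! (j + 2) = s ! j \<and> s ! (j + 1) < s ! (j + 3)"
  using occurs_length_4[of pat_p] red_eq_pat_p_iff by (simp add: pat_p_def)

lemma occurs_pat_q_iff:
  "occurs pat_q s j \<longleftrightarrow> j + 4 \<le> length s \<and> s ! j < s ! (j + 1) \<and> s ! (j + 2) = s ! (j + 1) \<and> s ! (j + 1) < s ! (j + 3)"
  using occurs_length_4[of pat_q] red_eq_pat_q_iff by (simp add: pat_q_def)

definition occurs_pq :: "int list \<Rightarrow> nat \<Rightarrow> bool" where
  "occurs_pq s j \<longleftrightarrow> j + 4 \<le> length s \<and> s ! j < s ! (j + 1) \<and> s ! (j + 1) < s ! (j + 3)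
     \<and> (s ! (j + 2) = s ! j \<or> s ! (j + 2) = s ! (j + 1))"

lemma occurs_pat_p_or_pat_q_iff: "occurs pat_p s j \<or> occurs pat_q s j \<longleftrightarrow> occurs_pq s j"
  unfolding occurs_pq_def occurs_pat_p_iff occurs_pat_q_iff by auto

lemma occurs_pq_update_beyond: "j + 3 < k \<Longrightarrow> occurs_pq (s[k := x]) j \<longleftrightarrow> occurs_pq s j"
  by (simp add: occurs_pq_def)

definition admissible_change :: "int list \<Rightarrow> int list \<Rightarrow> nat \<Rightarrow> bool" where
  "admissible_change e s m \<longleftrightarrow> 2 \<le> m \<and> m + 1 < length e
     \<and> e ! m \<le> e ! (m - 1) \<and> e ! (m - 1) < e ! (m + 1)
     \<and> s ! (m - 1) = e ! (m - 1) \<and> s ! m < e ! (m + 1)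
     \<and> (\<forall>j. j + 3 = m \<longrightarrow> \<not> occurs_pq s j)"

lemma admissible_change_update_beyond:
  "admissible_change e s m \<Longrightarrow> m < k \<Longrightarrow> admissible_change e (s[k := x]) m"
  by (auto simp: admissible_change_def occurs_pq_update_beyond)

definition algA_inv :: "int list \<Rightarrow> nat \<Rightarrow> int list \<times> int option \<Rightarrow> bool" where
  "algA_inv e k st \<longleftrightarrow> (case st of (s, l) \<Rightarrow> length s = length e
     \<and> (\<forall>m < length e. s ! m \<noteq> e ! m \<longrightarrow> m < k \<and> admissible_change e s m)
     \<and> (\<forall>m < k. k \<le> m + 2 \<longrightarrow> s ! m \<noteq> e ! m \<longrightarrow> l = Some (e ! m)))"

lemma algA_inv_occurs_pq:
  assumes inv: "algA_inv e k (s, l)" and occ: "occurs_pq s j"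
  shows "s ! (j + 1) = e ! (j + 1) \<and> s ! (j + 3) = e ! (j + 3)"
proof -
  have j: "j + 4 \<le> length e"
    and changed: "\<And>m. m < length e \<Longrightarrow> s ! m \<noteq> e ! m \<Longrightarrow> admissible_change e s m"
    using inv occ by (auto simp: algA_inv_def occurs_pq_def)
  have "s ! (j + 1) = e ! (j + 1)"
  proof (rule ccontr)
    assume "s ! (j + 1) \<noteq> e ! (j + 1)"
    then have "s ! (j + 1) < e ! (j + 2)" and "s ! (j + 2) = e ! (j + 2)"
      using changed[of "j + 1"] changed[of "j + 2"] j by (auto simp: admissible_change_def)
    then show False
      using occ by (auto simp: occurs_pq_def)
  qed
  moreover have "s ! (j + 3) = e ! (j + 3)"
    using changed[of "j + 3"] j occ by (auto simp: admissible_change_def)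
  ultimately show ?thesis ..
qed

lemma algA_inv_Suc_keep:
  assumes "algA_inv e k (s, l)" "k < length e"
  shows "algA_inv e (Suc k) (s, l)"
proof -
  have "s ! k = e ! k"
    using assms by (auto simp: algA_inv_def)
  then have "m < k" if "m < Suc k" "s ! m \<noteq> e ! m" for m
    using that less_Suc_eq by auto
  then show ?thesis
    using assms unfolding algA_inv_def by fastforce
qed

lemma algA_inv_Suc_update:
  assumes inv: "algA_inv e k (s, l)" and k: "k < length e"
    and change: "admissible_change e (s[k := x]) k"
  shows "algA_inv e (Suc k) (s[k := x], Some (e ! k))"
proof -
  have len: "length s = length e"
    and changed: "\<And>m. m < length e \<Longrightarrow> s ! m \<noteq> e ! m \<Longrightarrow> m < k \<and> admissible_change e s m"
    using inv by (auto simp: algA_inv_def)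
  have "m < Suc k \<and> admissible_change e (s[k := x]) m"
    if "m < length e" "s[k := x] ! m \<noteq> e ! m" for m
    using that changed[of m] change admissible_change_update_beyond by (cases "m = k") auto
  moreover have "m = k" if "m < Suc k" "Suc k \<le> m + 2" "s[k := x] ! m \<noteq> e ! m" for m
  proof -
    have "s[k := x] ! (k - 1) = e ! (k - 1)"
      using change by (simp add: admissible_change_def)
    moreover have "m = k \<or> m = k - 1"
      using that(1,2) by linarith
    ultimately show "m = k"
      using that(3) by auto
  qed
  ultimately show ?thesis
    using len unfolding algA_inv_def by auto
qed

lemma algA_inv_nth_untouched:
  "algA_inv e k (s, l) \<Longrightarrow> k \<le> m \<Longrightarrow> m < length e \<Longrightarrow> s ! m = e ! m"
  by (auto simp: algA_inv_def)

lemma algA_inv_nth_ascent: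
  "algA_inv e k (s, l) \<Longrightarrow> m < length e \<Longrightarrow> e ! (m - 1) < e ! m \<Longrightarrow> s ! m = e ! m"
  by (force simp: algA_inv_def admissible_change_def)

lemma algA_inv_step_copy_p:
  assumes inv: "algA_inv e k (s, l)" and k: "k < length e"
    and j: "k = j + 2" and occ: "occurs pat_p e j"
  shows "algA_inv e (Suc k) (algA_step e (s, l) k)"
proof -
  have e: "j + 4 \<le> length e" "e ! j < e ! (j + 1)" "e ! (j + 2) = e ! j" "e ! (j + 1) < e ! (j + 3)"
    using occ by (simp_all add: occurs_pat_p_iff)
  then have s1: "s ! (j + 1) = e ! (j + 1)"
    using algA_inv_nth_ascent[OF inv, of "j + 1"] by simp
  have "algA_step e (s, l) k = (s[k := e ! (j + 1)], Some (e ! k))"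
    using j occ s1 algA_inv_nth_untouched[OF inv _ k] by (simp add: algA_step_def)
  moreover have "admissible_change e (s[k := e ! (j + 1)]) k"
    using inv j e s1 by (auto simp: algA_inv_def admissible_change_def occurs_pq_def numeral_eq_Suc)
  ultimately show ?thesis
    using algA_inv_Suc_update[OF inv k] by simp
qed

lemma algA_inv_step_copy_q:
  assumes inv: "algA_inv e k (s, l)" and k: "k < length e"
    and j: "k = j + 2" and not_p: "\<not> occurs pat_p e j" and occ: "occurs pat_q e j"
  shows "algA_inv e (Suc k) (algA_step e (s, l) k)"
proof -
  have e: "j + 4 \<le> length e" "e ! j < e ! (j + 1)" "e ! (j + 2) = e ! (j + 1)" "e ! (j + 1) < e ! (j + 3)"
    using occ by (simp_all add: occurs_pat_q_iff)
  then have s1: "s ! (j + 1) = e ! (j + 1)"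
    using algA_inv_nth_ascent[OF inv, of "j + 1"] by simp
  have s0: "s ! j < e ! (j + 1)"
    using inv e by (cases "s ! j = e ! j") (auto simp: algA_inv_def admissible_change_def)
  have "algA_step e (s, l) k = (s[k := s ! j], Some (e ! k))"
    using j not_p occ algA_inv_nth_untouched[OF inv _ k] by (simp add: algA_step_def)
  moreover have "admissible_change e (s[k := s ! j]) k"
    using inv j e s0 s1 by (auto simp: algA_inv_def admissible_change_def occurs_pq_def numeral_eq_Suc)
  ultimately show ?thesis
    using algA_inv_Suc_update[OF inv k] by simp
qed

lemma algA_inv_step_swap:
  assumes inv: "algA_inv e k (s, l)" and k: "k < length e" and j: "k = j + 2"
    and not_pq: "\<not> occurs pat_p e j" "\<not> occurs pat_q e j" and occ: "occurs_pq s j"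
  shows "algA_inv e (Suc k) (algA_step e (s, l) k)"
proof -
  have len: "length s = length e"
    using inv by (simp add: algA_inv_def)
  have s1: "s ! (j + 1) = e ! (j + 1)"
    using algA_inv_occurs_pq[OF inv occ] by simp
  have j4: "j + 4 \<le> length e"
    using occ len by (simp add: occurs_pq_def)
  have s23: "s ! (j + 2) = e ! (j + 2)" "s ! (j + 3) = e ! (j + 3)"
    using algA_inv_nth_untouched[OF inv] j j4 by simp_all
  have "s ! j \<noteq> e ! j"
  proof
    assume "s ! j = e ! j"
    then have "occurs_pq e j"
      using occ s1 s23 len by (simp add: occurs_pq_def)
    then show False
      using not_pq occurs_pat_p_or_pat_q_iff by blast
  qed
  then have l: "l = Some (e ! j)" and adm: "admissible_change e s j"
    using inv j j4 by (auto simp: algA_inv_def)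
  have "algA_step e (s, l) k = (s[k := e ! j], Some (e ! k))"
    using j not_pq occ l algA_inv_nth_untouched[OF inv _ k] occurs_pat_p_or_pat_q_iff
    by (simp add: algA_step_def)
  moreover have "admissible_change e (s[k := e ! j]) k"
    using j occ adm s1 s23 j4 len by (auto simp: admissible_change_def occurs_pq_def numeral_eq_Suc)
  ultimately show ?thesis
    using algA_inv_Suc_update[OF inv k] by simp
qed

lemma algA_inv_step:
  assumes inv: "algA_inv e k (s, l)" and k: "k < length e"
  shows "algA_inv e (Suc k) (algA_step e (s, l) k)"
proof (cases "k < 2")
  case True
  then show ?thesis
    using algA_inv_Suc_keep[OF inv k] by (simp add: algA_step_def)
next
  case False
  then obtain j where j: "k = j + 2"
    using le_add_diff_inverse2 by (metis not_less)
  consider "occurs pat_p e j" | "\<not> occurs pat_p e j" "occurs pat_q e j"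
    | "\<not> occurs pat_p e j" "\<not> occurs pat_q e j" "occurs_pq s j"
    | "\<not> occurs pat_p e j" "\<not> occurs pat_q e j" "\<not> occurs_pq s j"
    by blast
  then show ?thesis
  proof cases
    case 4
    then have "algA_step e (s, l) k = (s, l)"
      using j occurs_pat_p_or_pat_q_iff by (simp add: algA_step_def)
    then show ?thesis
      using algA_inv_Suc_keep[OF inv k] by simp
  qed (use inv k j algA_inv_step_copy_p algA_inv_step_copy_q algA_inv_step_swap in blast)+
qed

lemma algA_inv_state: "k \<le> length e \<Longrightarrow> algA_inv e k (algA_state e k)"
proof (induction k)
  case 0
  show ?case
    by (simp add: algA_state_def algA_inv_def)
next
  case (Suc k)
  then have "algA_inv e k (algA_state e k)"
    by simp
  then show ?case
    using algA_inv_step[of e k] Suc.prems by (cases "algA_state e k") (simp add: algA_state_def)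
qed

theorem lemma3:
  fixes eps :: "int list" and k j :: nat
  assumes "k \<le> length eps"
    and "occurs pat_p (fst (algA_state eps k)) j \<or> occurs pat_q (fst (algA_state eps k)) j"
  shows "fst (algA_state eps k) ! (j + 1) = eps ! (j + 1)
       \<and> fst (algA_state eps k) ! (j + 3) = eps ! (j + 3)"
proof -
  obtain s l where st: "algA_state eps k = (s, l)"
    by fastforce
  have "algA_inv eps k (s, l)"
    using algA_inv_state[OF assms(1)] st by simp
  moreover have "occurs_pq s j"
    using assms(2) st occurs_pat_p_or_pat_q_iff by simp
  ultimately show ?thesis
    using algA_inv_occurs_pq st by simp
qed

end
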